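(* Let $X=(X^1,\dots,X^d)$ be a random vector taking values in a finite product set, and let $W$ be a random variable (on the same probability space) such that for every $i\in[d]$, $X^i$ is conditionally independent of $X^{-i}$ given $W$. Then $\mathcal B(X)\le\mathrm I(X;W)$. If moreover $W$ is discrete, then $\mathcal B(X)\le\mathcal H(W)$.
   Context: $X^{-i}$ denotes $X$ with coordinate $i$ removed. Dual total correlation: $\mathcal B(X)=\mathcal H(X)-\sum_{i=1}^d\mathcal H(X^i\mid X^{-i})$, with $\mathcal H$ Shannon entropy; $\mathrm I$ is mutual information. *)

theory Defs
  imports "HOL-Probability.Probability"
begin

definition pmass :: "'a measure \<Rightarrow> ('a \<Rightarrow> 'b) \<Rightarrow> 'b \<Rightarrow> real" where
  "pmass M Y y = measure M {\<omega> \<in> space M. Y \<omega> = y}"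

definition shannon_entropy :: "real \<Rightarrow> 'a measure \<Rightarrow> ('a \<Rightarrow> 'b) \<Rightarrow> real" where
  "shannon_entropy b M Y = - (\<Sum>y \<in> Y ` space M. pmass M Y y * log b (pmass M Y y))"

definition cond_shannon_entropy :: "real \<Rightarrow> 'a measure \<Rightarrow> ('a \<Rightarrow> 'b) \<Rightarrow> ('a \<Rightarrow> 'c) \<Rightarrow> real" where
  "cond_shannon_entropy b M Y Z =
     - (\<Sum>(y, z) \<in> (\<lambda>\<omega>. (Y \<omega>, Z \<omega>)) ` space M.
          pmass M (\<lambda>\<omega>. (Y \<omega>, Z \<omega>)) (y, z)
          * log b (pmass M (\<lambda>\<omega>. (Y \<omega>, Z \<omega>)) (y, z) / pmass M Z z))"

definition rvec :: "nat \<Rightarrow> (nat \<Rightarrow> 'a \<Rightarrow> 'v) \<Rightarrow> 'a \<Rightarrow> 'v list" where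
  "rvec d X \<omega> = map (\<lambda>j. X j \<omega>) [0..<d]"

definition rvec_minus :: "nat \<Rightarrow> (nat \<Rightarrow> 'a \<Rightarrow> 'v) \<Rightarrow> nat \<Rightarrow> 'a \<Rightarrow> 'v list" where
  "rvec_minus d X i \<omega> = map (\<lambda>j. X j \<omega>) (filter (\<lambda>j. j \<noteq> i) [0..<d])"

definition dual_total_correlation :: "real \<Rightarrow> 'a measure \<Rightarrow> nat \<Rightarrow> (nat \<Rightarrow> 'a \<Rightarrow> 'v) \<Rightarrow> real" where
  "dual_total_correlation b M d X =
     shannon_entropy b M (rvec d X) - (\<Sum>i<d. cond_shannon_entropy b M (X i) (rvec_minus d X i))"

definition cond_indep_given :: "'a measure \<Rightarrow> 'w measure \<Rightarrow> ('a \<Rightarrow> 'w) \<Rightarrow> ('a \<Rightarrow> 'b) \<Rightarrow> ('a \<Rightarrow> 'c) \<Rightarrow> bool" where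
  "cond_indep_given M N W Y Z \<longleftrightarrow>
     (\<forall>A B. AE \<omega> in M.
        real_cond_exp M (vimage_algebra (space M) W N)
          (indicator {\<omega> \<in> space M. Y \<omega> \<in> A \<and> Z \<omega> \<in> B}) \<omega>
        = real_cond_exp M (vimage_algebra (space M) W N) (indicator {\<omega> \<in> space M. Y \<omega> \<in> A}) \<omega>
          * real_cond_exp M (vimage_algebra (space M) W N) (indicator {\<omega> \<in> space M. Z \<omega> \<in> B}) \<omega>)"

definition discrete_entropy :: "real \<Rightarrow> 'a measure \<Rightarrow> ('a \<Rightarrow> 'w) \<Rightarrow> ennreal" where
  "discrete_entropy b M W =
     (\<integral>\<^sup>+ w. ennreal (- (pmass M W w * log b (pmass M W w))) \<partial>count_space (W ` space M))"

end

theory Submission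
  imports Defs
begin

text \<open>
  Write p(x) = P(X = x) and Q_x(w) = P(X = x | W = w). Conditional independence of X^i and
  X^{-i} given W factors Q_x(W) as r_i(x^i) s_i(x^{-i}), the conditional probabilities of the
  i-th coordinate and of the remaining ones. By the log-sum inequality each term
  p(x) log (p(x) / p(x^{-i})) of -H(X^i | X^{-i}) is at most E[Q_x(W) log r_i(x^i)], and
  subadditivity of the entropy of the conditional law Q(W) bounds the sum of these bounds over i
  by E[sum_x Q_x(W) log Q_x(W)]. Adding H(X) = -sum_x p(x) log p(x) yields
  B(X) <= sum_x E[Q_x(W) log (Q_x(W) / p(x))], which is I(X; W): the law of (X, W) has the
  density Q_x(w) / p(x) with respect to the product of the laws of X and W.

  If W is discrete, then Q_x(w) P(W = w) <= p(x), so the last integrand is at most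
  -log P(W = w), whose expectation is H(W).
\<close>

section \<open>Entropy inequalities\<close>

lemma log_le_minus_one_div_ln:
  assumes "1 < b" and "0 < t"
  shows "log b t \<le> (t - 1) / ln b"
  using ln_le_minus_one[OF \<open>0 < t\<close>] \<open>1 < b\<close> by (simp add: log_def divide_right_mono)

lemma mult_log_le_tangent:
  assumes b: "1 < b" and "0 \<le> r" and "0 < m"
  shows "r * log b m \<le> r * log b r + (m - r) / ln b"
proof (cases "r = 0")
  case True
  then show ?thesis using assms by simp
next
  case False
  with \<open>0 \<le> r\<close> have "0 < r" by simp
  have "r * (log b m - log b r) = r * log b (m / r)"
    using \<open>0 < r\<close> \<open>0 < m\<close> b by (simp add: log_divide)
  also have "\<dots> \<le> r * ((m / r - 1) / ln b)"
    by (rule mult_left_mono) (use log_le_minus_one_div_ln[OF b] \<open>0 < r\<close> \<open>0 < m\<close> in auto)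
  also have "\<dots> = (m - r) / ln b"
    using \<open>0 < r\<close> b by (simp add: field_simps)
  finally show ?thesis by (simp add: algebra_simps)
qed

lemma mult_mult_log_le_tangent:
  assumes "1 < b" and "0 \<le> r" and "0 \<le> s" and "0 < m"
  shows "r * s * log b m \<le> r * s * log b r + (m * s - r * s) / ln b"
proof -
  have "(r * log b m) * s \<le> (r * log b r + (m - r) / ln b) * s"
    using assms by (intro mult_right_mono mult_log_le_tangent) auto
  then show ?thesis by (simp add: algebra_simps diff_divide_distrib)
qed

lemma abs_mult_log_le:
  assumes b: "1 < b" and "0 \<le> t" and "t \<le> 1"
  shows "\<bar>t * log b t\<bar> \<le> 1 / ln b"
proof -
  have "0 \<le> t * log b t + (1 - t) / ln b"
    using mult_log_le_tangent[OF b \<open>0 \<le> t\<close>, of 1] by simp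
  moreover have "t * log b t \<le> 0"
    using assms by (cases "t = 0") (simp_all add: mult_nonneg_nonpos)
  moreover have "(1 - t) / ln b \<le> 1 / ln b"
    using assms by (simp add: divide_right_mono)
  ultimately show ?thesis by linarith
qed

lemma abs_mult_log_le_of_le:
  assumes b: "1 < b" and "0 \<le> t" and "t \<le> c"
  shows "\<bar>t * log b t\<bar> \<le> (1 + c * c) / ln b"
proof (cases "t \<le> 1")
  case True
  then have "\<bar>t * log b t\<bar> \<le> 1 / ln b" using abs_mult_log_le[OF b \<open>0 \<le> t\<close>] by simp
  also have "\<dots> \<le> (1 + c * c) / ln b" using b by (simp add: divide_right_mono)
  finally show ?thesis .
next
  case False
  have "log b t \<le> (t - 1) / ln b"
    using log_le_minus_one_div_ln[OF b, of t] False by simp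
  also have "\<dots> \<le> t / ln b"
    using b by (simp add: divide_right_mono)
  finally have "log b t \<le> t / ln b" .
  then have "t * log b t \<le> t * (t / ln b)"
    using \<open>0 \<le> t\<close> by (rule mult_left_mono)
  also have "\<dots> \<le> c * (c / ln b)"
    using False assms by (intro mult_mono divide_right_mono) auto
  also have "\<dots> \<le> (1 + c * c) / ln b" using b by (simp add: divide_right_mono)
  finally show ?thesis using False b by simp
qed

lemma sum_prod_nth_le_prod_sum:
  fixes F :: "'v list set" and R :: "nat \<Rightarrow> 'v \<Rightarrow> real"
  assumes F: "finite F" and len: "\<And>x. x \<in> F \<Longrightarrow> length x = d" and R: "\<And>i a. 0 \<le> R i a"
  shows "(\<Sum>x\<in>F. \<Prod>i<d. R i (x ! i)) \<le> (\<Prod>i<d. \<Sum>a\<in>(\<lambda>x. x ! i) ` F. R i a)"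
proof -
  define h :: "'v list \<Rightarrow> nat \<Rightarrow> 'v" where "h x = restrict (\<lambda>i. x ! i) {..<d}" for x
  have "inj_on h F"
  proof
    fix x y assume "x \<in> F" "y \<in> F" "h x = h y"
    have "x ! i = y ! i" if "i < d" for i
      using fun_cong[OF \<open>h x = h y\<close>, of i] that unfolding h_def by simp
    then show "x = y" using len \<open>x \<in> F\<close> \<open>y \<in> F\<close> by (auto intro!: nth_equalityI)
  qed
  then have "(\<Sum>x\<in>F. \<Prod>i<d. R i (x ! i)) = (\<Sum>p\<in>h ` F. \<Prod>i<d. R i (p i))"
    by (subst sum.reindex) (auto simp: h_def intro!: sum.cong prod.cong)
  also have "\<dots> \<le> (\<Sum>p\<in>(\<Pi>\<^sub>E i\<in>{..<d}. (\<lambda>x. x ! i) ` F). \<Prod>i<d. R i (p i))"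
    by (rule sum_mono2[OF finite_PiE]) (auto simp: h_def F PiE_def Pi_def intro!: prod_nonneg R)
  also have "\<dots> = (\<Prod>i<d. \<Sum>a\<in>(\<lambda>x. x ! i) ` F. R i a)"
    by (rule prod_sum_PiE[symmetric]) (auto simp: F)
  finally show ?thesis .
qed

lemma sum_mult_log_le_tangent:
  assumes b: "1 < b" and "finite I" and "0 \<le> q" and R: "\<And>i. i \<in> I \<Longrightarrow> q \<le> R i"
  shows "(\<Sum>i\<in>I. q * log b (R i)) \<le> q * log b q + ((\<Prod>i\<in>I. R i) - q) / ln b"
proof (cases "q = 0")
  case True
  then have "0 \<le> (\<Prod>i\<in>I. R i)"
    using R by (auto intro: prod_nonneg)
  then show ?thesis using True b by simp
next
  case False
  then have R_pos: "0 < R i" if "i \<in> I" for i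
    using R[OF that] \<open>0 \<le> q\<close> by linarith
  then have "ln (\<Prod>i\<in>I. R i) = (\<Sum>i\<in>I. ln (R i))"
    using \<open>finite I\<close> by (intro ln_prod) (auto simp: less_le)
  then have "(\<Sum>i\<in>I. q * log b (R i)) = q * log b (\<Prod>i\<in>I. R i)"
    by (simp add: log_def sum_divide_distrib sum_distrib_left)
  also have "\<dots> \<le> q * log b q + ((\<Prod>i\<in>I. R i) - q) / ln b"
    using R_pos by (intro mult_log_le_tangent[OF b \<open>0 \<le> q\<close> prod_pos]) auto
  finally show ?thesis .
qed

text \<open>The left side is minus the sum of the entropies of the coordinate marginals of \<open>Q\<close>.\<close>
lemma entropy_subadditivity_lists:
  fixes F :: "'v list set" and Q :: "'v list \<Rightarrow> real"
  assumes b: "1 < b" and F: "finite F" and len: "\<And>x. x \<in> F \<Longrightarrow> length x = d"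
    and Q: "\<And>x. x \<in> F \<Longrightarrow> 0 \<le> Q x" and Q1: "(\<Sum>x\<in>F. Q x) = 1"
  shows "(\<Sum>i<d. \<Sum>x\<in>F. Q x * log b (\<Sum>y\<in>{y \<in> F. y ! i = x ! i}. Q y))
    \<le> (\<Sum>x\<in>F. Q x * log b (Q x))"
proof -
  define R where "R i a = (\<Sum>y\<in>{y \<in> F. y ! i = a}. Q y)" for i a
  have R_nonneg: "0 \<le> R i a" for i a
    unfolding R_def using Q by (auto intro!: sum_nonneg)
  have "(\<Sum>x\<in>F. \<Sum>i<d. Q x * log b (R i (x ! i)))
      \<le> (\<Sum>x\<in>F. Q x * log b (Q x) + ((\<Prod>i<d. R i (x ! i)) - Q x) / ln b)"
  proof (rule sum_mono)
    fix x assume "x \<in> F"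
    have "Q x \<le> R i (x ! i)" for i
      unfolding R_def by (rule member_le_sum) (use \<open>x \<in> F\<close> F Q in auto)
    then show "(\<Sum>i<d. Q x * log b (R i (x ! i))) \<le> Q x * log b (Q x) + ((\<Prod>i<d. R i (x ! i)) - Q x) / ln b"
      using Q[OF \<open>x \<in> F\<close>] by (intro sum_mult_log_le_tangent[OF b]) auto
  qed
  also have "\<dots> = (\<Sum>x\<in>F. Q x * log b (Q x)) + ((\<Sum>x\<in>F. \<Prod>i<d. R i (x ! i)) - 1) / ln b"
    using Q1 by (simp add: sum.distrib sum_subtractf sum_divide_distrib[symmetric])
  also have "\<dots> \<le> (\<Sum>x\<in>F. Q x * log b (Q x))"
  proof -
    have "(\<Sum>a\<in>(\<lambda>x. x ! i) ` F. R i a) = 1" for i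
      using sum.image_gen[OF F, of Q "\<lambda>x. x ! i"] Q1 by (simp add: R_def)
    then have "(\<Sum>x\<in>F. \<Prod>i<d. R i (x ! i)) \<le> 1"
      using sum_prod_nth_le_prod_sum[of F d R] F len R_nonneg by simp
    then show ?thesis using b by (simp add: divide_nonpos_pos)
  qed
  finally show ?thesis by (simp add: R_def sum.swap[of _ "{..<d}"])
qed

lemma (in finite_measure) integrable_mult_mult_log:
  fixes r s :: "'a \<Rightarrow> real"
  assumes b: "1 < b" and [measurable]: "r \<in> borel_measurable M" "s \<in> borel_measurable M"
    and r: "AE \<omega> in M. 0 \<le> r \<omega> \<and> r \<omega> \<le> 1" and s: "AE \<omega> in M. 0 \<le> s \<omega> \<and> s \<omega> \<le> 1"
  shows "integrable M (\<lambda>\<omega>. r \<omega> * s \<omega> * log b (r \<omega>))"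
proof (rule integrable_const_bound[where B="1 / ln b"])
  show "AE \<omega> in M. norm (r \<omega> * s \<omega> * log b (r \<omega>)) \<le> 1 / ln b"
    using r s
  proof eventually_elim
    case (elim \<omega>)
    have "\<bar>r \<omega> * s \<omega> * log b (r \<omega>)\<bar> = s \<omega> * \<bar>r \<omega> * log b (r \<omega>)\<bar>"
      using elim by (simp add: abs_mult)
    also have "\<dots> \<le> 1 * (1 / ln b)"
      using elim abs_mult_log_le[OF b, of "r \<omega>"] by (intro mult_mono) auto
    finally show ?case by simp
  qed
qed simp

text \<open>The integral form of the log-sum inequality
  \<open>\<integral>q log (q / s) \<ge> (\<integral>q) log (\<integral>q / \<integral>s)\<close>, written for \<open>q = r s\<close>.\<close>
lemma (in prob_space) log_sum_inequality:
  fixes r s :: "'a \<Rightarrow> real"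
  assumes b: "1 < b"
    and rm[measurable]: "r \<in> borel_measurable M" and sm[measurable]: "s \<in> borel_measurable M"
    and r: "AE \<omega> in M. 0 \<le> r \<omega> \<and> r \<omega> \<le> 1" and s: "AE \<omega> in M. 0 \<le> s \<omega> \<and> s \<omega> \<le> 1"
  shows "(\<integral>\<omega>. r \<omega> * s \<omega> \<partial>M) * log b ((\<integral>\<omega>. r \<omega> * s \<omega> \<partial>M) / (\<integral>\<omega>. s \<omega> \<partial>M))
    \<le> (\<integral>\<omega>. r \<omega> * s \<omega> * log b (r \<omega>) \<partial>M)"
proof -
  define p where "p = (\<integral>\<omega>. r \<omega> * s \<omega> \<partial>M)"
  define ps where "ps = (\<integral>\<omega>. s \<omega> \<partial>M)"
  have rs: "AE \<omega> in M. 0 \<le> r \<omega> * s \<omega> \<and> r \<omega> * s \<omega> \<le> s \<omega>"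
    using r s by eventually_elim (auto intro: mult_left_le_one_le)
  have int_s: "integrable M s"
    by (rule integrable_const_bound[where B=1]) (use s in auto)
  have int_rs: "integrable M (\<lambda>\<omega>. r \<omega> * s \<omega>)"
  proof (rule integrable_const_bound[where B=1])
    show "AE \<omega> in M. norm (r \<omega> * s \<omega>) \<le> 1" using rs s by eventually_elim auto
  qed simp
  have int_rslog: "integrable M (\<lambda>\<omega>. r \<omega> * s \<omega> * log b (r \<omega>))"
    using b rm sm r s by (rule integrable_mult_mult_log)
  show ?thesis
  proof (cases "p = 0")
    case True
    have "AE \<omega> in M. r \<omega> * s \<omega> = 0"
      using integral_nonneg_eq_0_iff_AE[OF int_rs] rs True by (simp add: p_def)
    then have "(\<integral>\<omega>. r \<omega> * s \<omega> * log b (r \<omega>) \<partial>M) = (\<integral>\<omega>. 0 \<partial>M)"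
      by (intro integral_cong_AE) (auto elim!: eventually_mono)
    then show ?thesis using True by (simp add: p_def)
  next
    case False
    have "0 \<le> p" unfolding p_def using rs by (auto intro!: integral_nonneg_AE elim!: eventually_mono)
    with False have "0 < p" by simp
    moreover have "p \<le> ps"
      unfolding p_def ps_def using rs by (intro integral_mono_AE int_rs int_s) auto
    ultimately have "0 < p / ps" by simp
    have "AE \<omega> in M. r \<omega> * s \<omega> * log b (p / ps)
        \<le> r \<omega> * s \<omega> * log b (r \<omega>) + (p / ps * s \<omega> - r \<omega> * s \<omega>) / ln b"
      using r s by eventually_elim (intro mult_mult_log_le_tangent[OF b] \<open>0 < p / ps\<close>; simp)
    then have "(\<integral>\<omega>. r \<omega> * s \<omega> * log b (p / ps) \<partial>M)
        \<le> (\<integral>\<omega>. r \<omega> * s \<omega> * log b (r \<omega>) + (p / ps * s \<omega> - r \<omega> * s \<omega>) / ln b \<partial>M)"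
      using int_rs int_s int_rslog by (intro integral_mono_AE) auto
    also have "\<dots> = (\<integral>\<omega>. r \<omega> * s \<omega> * log b (r \<omega>) \<partial>M) + (p / ps * ps - p) / ln b"
      using int_rs int_s int_rslog by (simp add: p_def ps_def)
    finally show ?thesis
      using \<open>0 < p\<close> \<open>p \<le> ps\<close> by (simp add: p_def ps_def)
  qed
qed

section \<open>Conditional probabilities given a random variable\<close>

lemma (in prob_space) finite_measure_subalgebra_vimage_algebra:
  assumes "W \<in> measurable M N"
  shows "finite_measure_subalgebra M (vimage_algebra (space M) W N)"
  by unfold_locales (use sets_image_in_sets[OF refl assms] in \<open>auto simp: subalgebra_def\<close>)

lemma (in finite_measure_subalgebra) real_cond_exp_indicator_bounds:
  assumes "A \<in> sets M"
  shows "AE \<omega> in M. 0 \<le> real_cond_exp M F (indicator A) \<omega> \<and> real_cond_exp M F (indicator A) \<omega> \<le> 1"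
proof -
  have "integrable M (indicator A :: 'a \<Rightarrow> real)"
    using assms by (simp add: emeasure_eq_measure)
  then have "AE \<omega> in M. 0 \<le> real_cond_exp M F (indicator A) \<omega>"
    and "AE \<omega> in M. real_cond_exp M F (indicator A) \<omega> \<le> 1"
    by (intro real_cond_exp_ge_c real_cond_exp_le_c; simp)+
  then show ?thesis by eventually_elim simp
qed

lemma integral_indicator_comp_mult_indicator:
  assumes [measurable]: "W \<in> measurable M N" "A \<in> sets M" "B \<in> sets N"
  shows "(\<integral>\<omega>. indicator B (W \<omega>) * indicator A \<omega> \<partial>M) = measure M {\<omega> \<in> A. W \<omega> \<in> B}"
proof -
  have "{\<omega> \<in> A. W \<omega> \<in> B} \<in> sets M" by measurable
  moreover have "indicator B (W \<omega>) * indicator A \<omega> = (indicator {\<omega> \<in> A. W \<omega> \<in> B} \<omega> :: real)" for \<omega>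
    by (auto simp: indicator_def)
  ultimately show ?thesis
    using sets.sets_into_space by (simp add: Int_absorb2)
qed

lemma (in prob_space) real_cond_exp_vimage_algebra_eq:
  assumes W[measurable]: "W \<in> measurable M N" and [measurable]: "g \<in> borel_measurable N"
    and "integrable M f" and "integrable M (\<lambda>\<omega>. g (W \<omega>))"
    and eq: "\<And>B. B \<in> sets N \<Longrightarrow>
      (\<integral>\<omega>. indicator B (W \<omega>) * f \<omega> \<partial>M) = (\<integral>\<omega>. indicator B (W \<omega>) * g (W \<omega>) \<partial>M)"
  shows "AE \<omega> in M. real_cond_exp M (vimage_algebra (space M) W N) f \<omega> = g (W \<omega>)"
proof -
  let ?G = "vimage_algebra (space M) W N"
  interpret finite_measure_subalgebra M ?G
    using W by (rule finite_measure_subalgebra_vimage_algebra)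
  have W_space: "W \<in> space M \<rightarrow> space N"
    using measurable_space[OF W] by auto
  show ?thesis
  proof (rule real_cond_exp_charact)
    fix A assume "A \<in> sets ?G"
    then obtain B where B: "B \<in> sets N" "A = W -` B \<inter> space M"
      using sets_vimage_algebra2[OF W_space] by auto
    have "indicator A \<omega> = (indicator B (W \<omega>) :: real)" if "\<omega> \<in> space M" for \<omega>
      using B that by (simp add: indicator_def)
    then show "(\<integral>\<omega>\<in>A. f \<omega> \<partial>M) = (\<integral>\<omega>\<in>A. g (W \<omega>) \<partial>M)"
      using eq[OF B(1)] by (simp add: set_lebesgue_integral_def cong: Bochner_Integration.integral_cong)
  next
    show "(\<lambda>\<omega>. g (W \<omega>)) \<in> borel_measurable ?G"
      using measurable_vimage_algebra1[OF W_space] by measurable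
  qed fact+
qed

lemma (in prob_space) emeasure_distr_restricted:
  assumes W[measurable]: "W \<in> measurable M N" and A[measurable]: "A \<in> sets M" and "B \<in> sets N"
  shows "emeasure (distr (density M (indicator A)) N W) B = emeasure M {\<omega> \<in> A. W \<omega> \<in> B}"
proof -
  have "W \<in> measurable (density M (indicator A)) N"
    by (subst measurable_cong_sets[of _ M N N]) simp_all
  moreover have "{\<omega> \<in> A. W \<omega> \<in> B} = A \<inter> (W -` B \<inter> space M)"
    using sets.sets_into_space[OF A] by auto
  ultimately show ?thesis
    using assms by (simp add: emeasure_distr emeasure_restricted measurable_sets[OF W])
qed

lemma (in prob_space) distr_restricted_eq_density:
  assumes W[measurable]: "W \<in> measurable M N" and A[measurable]: "A \<in> sets M"
  obtains G where "G \<in> borel_measurable N" and "\<And>w. 0 \<le> G w"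
    and "density (distr M N W) (\<lambda>w. ennreal (G w)) = distr (density M (indicator A)) N W"
proof -
  define \<nu> where "\<nu> = distr M N W"
  define \<nu>A where "\<nu>A = distr (density M (indicator A)) N W"
  interpret \<nu>: prob_space \<nu>
    unfolding \<nu>_def by (rule prob_space_distr[OF W])
  have [simp]: "sets \<nu> = sets N" "sets \<nu>A = sets N" "space \<nu>A = space N"
    by (simp_all add: \<nu>_def \<nu>A_def)
  have \<nu>A: "emeasure \<nu>A B = emeasure M {\<omega> \<in> A. W \<omega> \<in> B}" if "B \<in> sets N" for B
    unfolding \<nu>A_def using W A that by (rule emeasure_distr_restricted)
  have ac: "absolutely_continuous \<nu> \<nu>A"
    unfolding absolutely_continuous_def
  proof
    fix B assume "B \<in> null_sets \<nu>"
    moreover have "emeasure M {\<omega> \<in> A. W \<omega> \<in> B} \<le> emeasure M (W -` B \<inter> space M)" if "B \<in> sets N"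
      using that sets.sets_into_space[OF A] by (intro emeasure_mono) (auto simp: measurable_sets[OF W])
    ultimately show "B \<in> null_sets \<nu>A"
      by (auto simp: \<nu>A \<nu>_def emeasure_distr null_sets_def)
  qed
  have "finite_measure \<nu>A"
    by standard (use \<nu>A[of "space N"] in simp)
  then have "AE w in \<nu>. RN_deriv \<nu> \<nu>A w \<noteq> \<infinity>"
    by (rule \<nu>.RN_deriv_finite[OF finite_measure.sigma_finite_measure ac]) simp
  then have "AE w in \<nu>. ennreal (enn2real (RN_deriv \<nu> \<nu>A w)) = RN_deriv \<nu> \<nu>A w"
    by eventually_elim (simp add: less_top)
  then have density: "density \<nu> (\<lambda>w. ennreal (enn2real (RN_deriv \<nu> \<nu>A w))) = \<nu>A"
    using \<nu>.density_RN_deriv[OF ac] by (subst density_cong[where f'="RN_deriv \<nu> \<nu>A"]) auto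
  have [measurable]: "RN_deriv \<nu> \<nu>A \<in> borel_measurable N"
    by (subst measurable_cong_sets[of N \<nu> borel borel]) (simp_all add: borel_measurable_RN_deriv)
  show ?thesis
  proof (rule that)
    show "(\<lambda>w. enn2real (RN_deriv \<nu> \<nu>A w)) \<in> borel_measurable N"
      by measurable
    show "density (distr M N W) (\<lambda>w. ennreal (enn2real (RN_deriv \<nu> \<nu>A w)))
        = distr (density M (indicator A)) N W"
      using density unfolding \<nu>_def \<nu>A_def .
  qed simp
qed

lemma (in prob_space) restricted_law_density_exists:
  assumes W[measurable]: "W \<in> measurable M N" and A[measurable]: "A \<in> sets M"
  obtains G where "G \<in> borel_measurable N" and "\<And>w. 0 \<le> G w"
    and "integrable M (\<lambda>\<omega>. G (W \<omega>))"
    and "\<And>B. B \<in> sets N \<Longrightarrow> (\<integral>\<omega>. indicator B (W \<omega>) * G (W \<omega>) \<partial>M) = measure M {\<omega> \<in> A. W \<omega> \<in> B}"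
proof -
  obtain G where [measurable]: "G \<in> borel_measurable N" and G_nonneg: "\<And>w. 0 \<le> G w"
    and density_G: "density (distr M N W) (\<lambda>w. ennreal (G w)) = distr (density M (indicator A)) N W"
    using distr_restricted_eq_density[OF W A] by blast
  have nn_integral_G: "(\<integral>\<^sup>+\<omega>. ennreal (indicator B (W \<omega>) * G (W \<omega>)) \<partial>M) = emeasure M {\<omega> \<in> A. W \<omega> \<in> B}"
    if B[measurable]: "B \<in> sets N" for B
  proof -
    have "(\<integral>\<^sup>+\<omega>. ennreal (indicator B (W \<omega>) * G (W \<omega>)) \<partial>M)
        = (\<integral>\<^sup>+w. ennreal (G w) * indicator B w \<partial>distr M N W)"
      by (subst nn_integral_distr) (auto intro!: nn_integral_cong simp: indicator_def)
    also have "\<dots> = emeasure (distr (density M (indicator A)) N W) B"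
      by (subst density_G[symmetric], subst emeasure_density) auto
    finally show ?thesis using emeasure_distr_restricted[OF W A B] by simp
  qed
  have "(\<integral>\<^sup>+\<omega>. ennreal (G (W \<omega>)) \<partial>M) = emeasure M {\<omega> \<in> A. W \<omega> \<in> space N}"
    using nn_integral_G[of "space N"] measurable_space[OF W]
    by (simp add: indicator_def cong: nn_integral_cong)
  then have "integrable M (\<lambda>\<omega>. G (W \<omega>))"
    by (intro integrableI_nonneg) (auto simp: G_nonneg less_top[symmetric])
  moreover have "(\<integral>\<omega>. indicator B (W \<omega>) * G (W \<omega>) \<partial>M) = measure M {\<omega> \<in> A. W \<omega> \<in> B}"
    if "B \<in> sets N" for B
    using that by (subst integral_eq_nn_integral) (auto simp: nn_integral_G G_nonneg measure_def)
  ultimately show ?thesis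
    by (intro that[OF _ G_nonneg]) simp_all
qed

lemma (in prob_space) cond_prob_fun_exists:
  assumes W[measurable]: "W \<in> measurable M N" and A[measurable]: "A \<in> sets M"
  shows "\<exists>g. g \<in> borel_measurable N \<and> (\<forall>w. 0 \<le> g w \<and> g w \<le> 1) \<and>
    (\<forall>B\<in>sets N. (\<integral>\<omega>. indicator B (W \<omega>) * g (W \<omega>) \<partial>M) = measure M {\<omega> \<in> A. W \<omega> \<in> B})"
proof -
  obtain G where [measurable]: "G \<in> borel_measurable N" and G_nonneg: "\<And>w. 0 \<le> G w"
    and int_G: "integrable M (\<lambda>\<omega>. G (W \<omega>))"
    and G: "\<And>B. B \<in> sets N \<Longrightarrow> (\<integral>\<omega>. indicator B (W \<omega>) * G (W \<omega>) \<partial>M) = measure M {\<omega> \<in> A. W \<omega> \<in> B}"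
    using restricted_law_density_exists[OF W A] by blast
  interpret finite_measure_subalgebra M "vimage_algebra (space M) W N"
    using W by (rule finite_measure_subalgebra_vimage_algebra)
  have "AE \<omega> in M. real_cond_exp M (vimage_algebra (space M) W N) (indicator A) \<omega> = G (W \<omega>)"
    using A by (intro real_cond_exp_vimage_algebra_eq int_G)
      (simp_all add: G integral_indicator_comp_mult_indicator[OF W A] emeasure_eq_measure)
  then have G_le_1: "AE \<omega> in M. G (W \<omega>) \<le> 1"
    using real_cond_exp_indicator_bounds[OF A] by eventually_elim simp
  define g where "g w = min 1 (G w)" for w
  have "(\<integral>\<omega>. indicator B (W \<omega>) * g (W \<omega>) \<partial>M) = measure M {\<omega> \<in> A. W \<omega> \<in> B}"
    if "B \<in> sets N" for B
  proof -
    have "(\<integral>\<omega>. indicator B (W \<omega>) * g (W \<omega>) \<partial>M) = (\<integral>\<omega>. indicator B (W \<omega>) * G (W \<omega>) \<partial>M)"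
      using that G_le_1 by (intro integral_cong_AE) (auto simp: g_def elim!: eventually_mono)
    then show ?thesis using G[OF that] by simp
  qed
  moreover have "g \<in> borel_measurable N"
    unfolding g_def[abs_def] by measurable
  moreover have "0 \<le> g w" "g w \<le> 1" for w
    by (simp_all add: g_def G_nonneg)
  ultimately show ?thesis by blast
qed

section \<open>The random vector and its observation\<close>

lemma simple_function_map:
  assumes "\<And>j. j \<in> set js \<Longrightarrow> simple_function M (f j)"
  shows "simple_function M (\<lambda>\<omega>. map (\<lambda>j. f j \<omega>) js)"
  using assms by (induction js) (auto intro: simple_function_compose2[where h=Cons])

definition remove_coord :: "nat \<Rightarrow> 'v list \<Rightarrow> 'v list" where
  "remove_coord i x = map (\<lambda>j. x ! j) (filter (\<lambda>j. j \<noteq> i) [0..<length x])"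

lemma nth_remove_coord_eq_iff:
  assumes "length y = length x"
  shows "x ! i = y ! i \<and> remove_coord i x = remove_coord i y \<longleftrightarrow> x = y"
proof
  assume eq: "x ! i = y ! i \<and> remove_coord i x = remove_coord i y"
  show "x = y"
  proof (rule nth_equalityI)
    fix j assume "j < length x"
    show "x ! j = y ! j"
    proof (cases "j = i")
      case False
      with \<open>j < length x\<close> have "j \<in> set (filter (\<lambda>j. j \<noteq> i) [0..<length x])" by simp
      then show ?thesis using eq assms by (simp add: remove_coord_def map_eq_conv)
    qed (use eq in simp)
  qed (use assms in simp)
qed simp

lemma pmass_comp_inj_on:
  assumes "inj_on f (Y ` space M)" and "y \<in> Y ` space M"
  shows "pmass M (\<lambda>\<omega>. f (Y \<omega>)) (f y) = pmass M Y y"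
  unfolding pmass_def using assms by (intro arg_cong[where f="measure M"]) (auto dest: inj_onD)

locale finite_vector_observation = prob_space M for M :: "'a measure" +
  fixes N :: "'w measure" and b :: real and d :: nat
    and X :: "nat \<Rightarrow> 'a \<Rightarrow> 'v" and S :: "nat \<Rightarrow> 'v set" and W :: "'a \<Rightarrow> 'w"
  assumes b: "1 < b"
    and finite_S: "\<And>i. i < d \<Longrightarrow> finite (S i)"
    and measurable_X[measurable]: "\<And>i. i < d \<Longrightarrow> X i \<in> measurable M (count_space UNIV)"
    and X_in_S: "\<And>i \<omega>. i < d \<Longrightarrow> \<omega> \<in> space M \<Longrightarrow> X i \<omega> \<in> S i"
    and measurable_W[measurable]: "W \<in> measurable M N"
begin

abbreviation "Xvec \<equiv> rvec d X"
abbreviation "Xrest i \<equiv> rvec_minus d X i"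
abbreviation "pX \<equiv> pmass M Xvec"

definition Xvals :: "'v list set" where
  "Xvals = Xvec ` space M"

lemma pX_nonneg[simp]: "0 \<le> pX x"
  by (simp add: pmass_def)

lemma simple_function_X: "i < d \<Longrightarrow> simple_function M (X i)"
  using finite_S measurable_X X_in_S
  by (auto simp: simple_function_eq_measurable intro: finite_subset[of _ "S i"])

lemma simple_function_Xvec: "simple_function M Xvec"
  unfolding rvec_def[abs_def] by (rule simple_function_map) (simp add: simple_function_X)

lemma measurable_Xvec[measurable]: "Xvec \<in> measurable M (count_space UNIV)"
  using simple_function_Xvec by (rule measurable_simple_function)

lemma measurable_Xrest[measurable]: "Xrest i \<in> measurable M (count_space UNIV)"
  unfolding rvec_minus_def[abs_def]
  by (intro measurable_simple_function simple_function_map) (simp add: simple_function_X)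

lemma finite_Xvals: "finite Xvals"
  using simple_function_Xvec by (simp add: Xvals_def simple_function_def)

lemma length_Xvals: "x \<in> Xvals \<Longrightarrow> length x = d"
  by (auto simp: Xvals_def rvec_def)

lemma nth_Xvec: "i < d \<Longrightarrow> Xvec \<omega> ! i = X i \<omega>"
  by (simp add: rvec_def)

lemma Xrest_eq_remove_coord: "Xrest i \<omega> = remove_coord i (Xvec \<omega>)"
  by (simp add: rvec_def rvec_minus_def remove_coord_def)

lemma Xvec_eq_iff:
  assumes "i < d" and "length x = d"
  shows "Xvec \<omega> = x \<longleftrightarrow> X i \<omega> = x ! i \<and> Xrest i \<omega> = remove_coord i x"
  using nth_remove_coord_eq_iff[of x "Xvec \<omega>" i] assms
  by (auto simp: nth_Xvec Xrest_eq_remove_coord rvec_def)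

lemma sets_Xvec_in: "{\<omega> \<in> space M. Xvec \<omega> \<in> C} \<in> sets M"
proof -
  have "{\<omega> \<in> space M. Xvec \<omega> \<in> C} = Xvec -` C \<inter> space M" by auto
  then show ?thesis using measurable_sets[OF measurable_Xvec, of C] by simp
qed

lemma shannon_entropy_Xvec: "shannon_entropy b M Xvec = - (\<Sum>x\<in>Xvals. pX x * log b (pX x))"
  unfolding shannon_entropy_def Xvals_def ..

lemma cond_shannon_entropy_coord:
  assumes "i < d"
  shows "cond_shannon_entropy b M (X i) (Xrest i)
    = - (\<Sum>x\<in>Xvals. pX x * log b (pX x / pmass M (Xrest i) (remove_coord i x)))"
proof -
  define \<phi> where "\<phi> x = (x ! i, remove_coord i x)" for x :: "'v list"
  have pair_eq: "(\<lambda>\<omega>. (X i \<omega>, Xrest i \<omega>)) = (\<lambda>\<omega>. \<phi> (Xvec \<omega>))"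
    using assms by (simp add: \<phi>_def nth_Xvec Xrest_eq_remove_coord)
  have image_eq: "(\<lambda>\<omega>. \<phi> (Xvec \<omega>)) ` space M = \<phi> ` Xvals"
    by (simp add: Xvals_def image_image)
  have inj: "inj_on \<phi> Xvals"
    by (rule inj_onI) (simp add: \<phi>_def length_Xvals nth_remove_coord_eq_iff)
  have "cond_shannon_entropy b M (X i) (Xrest i)
      = - (\<Sum>x\<in>Xvals. pmass M (\<lambda>\<omega>. \<phi> (Xvec \<omega>)) (\<phi> x)
          * log b (pmass M (\<lambda>\<omega>. \<phi> (Xvec \<omega>)) (\<phi> x) / pmass M (Xrest i) (snd (\<phi> x))))"
    unfolding cond_shannon_entropy_def pair_eq image_eq
    by (simp add: sum.reindex[OF inj] case_prod_beta)
  also have "\<dots> = - (\<Sum>x\<in>Xvals. pX x * log b (pX x / pmass M (Xrest i) (remove_coord i x)))"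
    using pmass_comp_inj_on[OF inj[unfolded Xvals_def]] by (simp add: Xvals_def \<phi>_def)
  finally show ?thesis .
qed

text \<open>\<open>cpmf x w\<close> is a version of the conditional probability \<open>P(X = x | W = w)\<close>.\<close>
definition cpmf :: "'v list \<Rightarrow> 'w \<Rightarrow> real" where
  "cpmf x = (SOME g. g \<in> borel_measurable N \<and> (\<forall>w. 0 \<le> g w \<and> g w \<le> 1) \<and>
    (\<forall>B\<in>sets N. (\<integral>\<omega>. indicator B (W \<omega>) * g (W \<omega>) \<partial>M)
      = measure M {\<omega> \<in> space M. Xvec \<omega> = x \<and> W \<omega> \<in> B}))"

lemma cpmf_spec:
  "cpmf x \<in> borel_measurable N \<and> (\<forall>w. 0 \<le> cpmf x w \<and> cpmf x w \<le> 1) \<and>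
    (\<forall>B\<in>sets N. (\<integral>\<omega>. indicator B (W \<omega>) * cpmf x (W \<omega>) \<partial>M)
      = measure M {\<omega> \<in> space M. Xvec \<omega> = x \<and> W \<omega> \<in> B})"
proof -
  have eq: "{\<omega> \<in> {\<omega> \<in> space M. Xvec \<omega> = x}. W \<omega> \<in> B} = {\<omega> \<in> space M. Xvec \<omega> = x \<and> W \<omega> \<in> B}" for B
    by auto
  have "{\<omega> \<in> space M. Xvec \<omega> = x} \<in> sets M" by measurable
  from cond_prob_fun_exists[OF measurable_W this] have "\<exists>g. g \<in> borel_measurable N \<and> (\<forall>w. 0 \<le> g w \<and> g w \<le> 1) \<and>
    (\<forall>B\<in>sets N. (\<integral>\<omega>. indicator B (W \<omega>) * g (W \<omega>) \<partial>M)
      = measure M {\<omega> \<in> space M. Xvec \<omega> = x \<and> W \<omega> \<in> B})"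
    unfolding eq .
  then show ?thesis
    unfolding cpmf_def by (rule someI_ex)
qed

lemma measurable_cpmf[measurable]: "cpmf x \<in> borel_measurable N"
  and cpmf_nonneg: "0 \<le> cpmf x w"
  and cpmf_le_1: "cpmf x w \<le> 1"
  using cpmf_spec by blast+

lemma integral_indicator_mult_cpmf:
  "B \<in> sets N \<Longrightarrow> (\<integral>\<omega>. indicator B (W \<omega>) * cpmf x (W \<omega>) \<partial>M)
      = measure M {\<omega> \<in> space M. Xvec \<omega> = x \<and> W \<omega> \<in> B}"
  using cpmf_spec by blast

lemma integrable_cpmf[simp]: "integrable M (\<lambda>\<omega>. cpmf x (W \<omega>))"
  by (rule integrable_const_bound[where B=1]) (simp_all add: cpmf_nonneg cpmf_le_1)

lemma integral_cpmf: "(\<integral>\<omega>. cpmf x (W \<omega>) \<partial>M) = pX x"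
proof -
  have "(\<integral>\<omega>. cpmf x (W \<omega>) \<partial>M) = (\<integral>\<omega>. indicator (space N) (W \<omega>) * cpmf x (W \<omega>) \<partial>M)"
    using measurable_space[OF measurable_W] by (intro Bochner_Integration.integral_cong) auto
  also have "\<dots> = pX x"
  proof -
    have "{\<omega> \<in> space M. Xvec \<omega> = x \<and> W \<omega> \<in> space N} = {\<omega> \<in> space M. Xvec \<omega> = x}"
      using measurable_space[OF measurable_W] by auto
    then show ?thesis by (simp add: integral_indicator_mult_cpmf pmass_def)
  qed
  finally show ?thesis .
qed

lemma measure_Xvec_eq_W_in_le: "measure M {\<omega> \<in> space M. Xvec \<omega> = x \<and> W \<omega> \<in> B} \<le> pX x"
  unfolding pmass_def by (rule finite_measure_mono) (auto simp: sets_Xvec_in[of "{x}", simplified])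

abbreviation cond_prob :: "'a set \<Rightarrow> 'a \<Rightarrow> real" where
  "cond_prob A \<equiv> real_cond_exp M (vimage_algebra (space M) W N) (indicator A)"

sublocale W: finite_measure_subalgebra M "vimage_algebra (space M) W N"
  using measurable_W by (rule finite_measure_subalgebra_vimage_algebra)

lemma cond_prob_Xvec_eq_cpmf:
  "AE \<omega> in M. cond_prob {\<omega> \<in> space M. Xvec \<omega> = x} \<omega> = cpmf x (W \<omega>)"
proof (rule real_cond_exp_vimage_algebra_eq)
  fix B assume "B \<in> sets N"
  then show "(\<integral>\<omega>. indicator B (W \<omega>) * indicator {\<omega> \<in> space M. Xvec \<omega> = x} \<omega> \<partial>M)
      = (\<integral>\<omega>. indicator B (W \<omega>) * cpmf x (W \<omega>) \<partial>M)"
    by (simp add: integral_indicator_comp_mult_indicator[OF measurable_W] integral_indicator_mult_cpmf)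
qed (simp_all add: emeasure_eq_measure)

lemma cond_prob_Xvec_in:
  "AE \<omega> in M. cond_prob {\<omega> \<in> space M. Xvec \<omega> \<in> C} \<omega> = (\<Sum>x\<in>Xvals \<inter> C. cpmf x (W \<omega>))"
proof -
  have "indicator {\<omega> \<in> space M. Xvec \<omega> \<in> C} \<omega>
      = (\<Sum>x\<in>Xvals \<inter> C. indicator {\<omega> \<in> space M. Xvec \<omega> = x} \<omega> :: real)" if "\<omega> \<in> space M" for \<omega>
  proof -
    have "(\<Sum>x\<in>Xvals \<inter> C. indicator {\<omega> \<in> space M. Xvec \<omega> = x} \<omega> :: real)
        = (\<Sum>x\<in>Xvals \<inter> C. if Xvec \<omega> = x then 1 else 0)"
      using that by (intro sum.cong) (auto simp: indicator_def)
    then show ?thesis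
      using that finite_Xvals by (simp add: sum.delta indicator_def Xvals_def)
  qed
  then have "AE \<omega> in M. cond_prob {\<omega> \<in> space M. Xvec \<omega> \<in> C} \<omega>
      = real_cond_exp M (vimage_algebra (space M) W N)
          (\<lambda>\<omega>. \<Sum>x\<in>Xvals \<inter> C. indicator {\<omega> \<in> space M. Xvec \<omega> = x} \<omega>) \<omega>"
    by (intro W.real_cond_exp_cong AE_I2) (simp_all add: borel_measurable_indicator sets_Xvec_in)
  moreover have "AE \<omega> in M. real_cond_exp M (vimage_algebra (space M) W N)
      (\<lambda>\<omega>. \<Sum>x\<in>Xvals \<inter> C. indicator {\<omega> \<in> space M. Xvec \<omega> = x} \<omega>) \<omega>
      = (\<Sum>x\<in>Xvals \<inter> C. cond_prob {\<omega> \<in> space M. Xvec \<omega> = x} \<omega>)"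
    by (rule W.real_cond_exp_sum) (simp add: emeasure_eq_measure)
  moreover have "AE \<omega> in M. \<forall>x\<in>Xvals \<inter> C. cond_prob {\<omega> \<in> space M. Xvec \<omega> = x} \<omega> = cpmf x (W \<omega>)"
    using finite_Xvals cond_prob_Xvec_eq_cpmf by (intro AE_finite_allI) auto
  ultimately show ?thesis by eventually_elim simp
qed

lemma sum_cpmf: "AE \<omega> in M. (\<Sum>x\<in>Xvals. cpmf x (W \<omega>)) = 1"
proof -
  have "indicator (space M) \<in> borel_measurable (vimage_algebra (space M) W N)"
    by (metis borel_measurable_indicator sets.top space_vimage_algebra)
  then have "AE \<omega> in M. cond_prob (space M) \<omega> = indicator (space M) \<omega>"
    by (intro W.real_cond_exp_F_meas) (simp_all add: emeasure_eq_measure)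
  then show ?thesis
    using cond_prob_Xvec_in[of UNIV] AE_space by eventually_elim simp
qed

lemma cpmf_factorization:
  assumes "cond_indep_given M N W (X i) (Xrest i)" and "i < d" and "length x = d"
  shows "AE \<omega> in M. cpmf x (W \<omega>)
    = cond_prob {\<omega> \<in> space M. X i \<omega> = x ! i} \<omega> * cond_prob {\<omega> \<in> space M. Xrest i \<omega> = remove_coord i x} \<omega>"
proof -
  have events: "{\<omega> \<in> space M. X i \<omega> = x ! i \<and> Xrest i \<omega> = remove_coord i x} = {\<omega> \<in> space M. Xvec \<omega> = x}"
    using Xvec_eq_iff[OF assms(2,3)] by auto
  from assms(1) have "AE \<omega> in M.
      cond_prob {\<omega> \<in> space M. X i \<omega> \<in> {x ! i} \<and> Xrest i \<omega> \<in> {remove_coord i x}} \<omega>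
      = cond_prob {\<omega> \<in> space M. X i \<omega> \<in> {x ! i}} \<omega>
        * cond_prob {\<omega> \<in> space M. Xrest i \<omega> \<in> {remove_coord i x}} \<omega>"
    unfolding cond_indep_given_def by blast
  then have "AE \<omega> in M. cond_prob {\<omega> \<in> space M. Xvec \<omega> = x} \<omega>
      = cond_prob {\<omega> \<in> space M. X i \<omega> = x ! i} \<omega> * cond_prob {\<omega> \<in> space M. Xrest i \<omega> = remove_coord i x} \<omega>"
    by (simp add: events)
  with cond_prob_Xvec_eq_cpmf[of x] show ?thesis by eventually_elim simp
qed

lemma cond_prob_X_eq:
  assumes "i < d"
  shows "AE \<omega> in M. cond_prob {\<omega> \<in> space M. X i \<omega> = a} \<omega> = (\<Sum>y\<in>{y \<in> Xvals. y ! i = a}. cpmf y (W \<omega>))"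
proof -
  have "{\<omega> \<in> space M. X i \<omega> = a} = {\<omega> \<in> space M. Xvec \<omega> \<in> {y. y ! i = a}}"
    using assms by (simp add: nth_Xvec)
  moreover have "Xvals \<inter> {y. y ! i = a} = {y \<in> Xvals. y ! i = a}" by auto
  ultimately show ?thesis using cond_prob_Xvec_in[of "{y. y ! i = a}"] by simp
qed

lemma cond_prob_bounds:
  "A \<in> sets M \<Longrightarrow> AE \<omega> in M. 0 \<le> cond_prob A \<omega> \<and> cond_prob A \<omega> \<le> 1"
  by (rule W.real_cond_exp_indicator_bounds)

end

section \<open>Mutual information with the observation\<close>

context finite_vector_observation
begin

lemma integrable_cpmf_log: "integrable M (\<lambda>\<omega>. cpmf x (W \<omega>) * log b (cpmf x (W \<omega>)))"
  by (rule integrable_const_bound[where B="1 / ln b"])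
     (simp_all add: abs_mult_log_le[OF b] cpmf_nonneg cpmf_le_1)

lemma cond_entropy_term_le_integral:
  assumes "cond_indep_given M N W (X i) (Xrest i)" and "i < d" and "x \<in> Xvals"
  shows "pX x * log b (pX x / pmass M (Xrest i) (remove_coord i x))
    \<le> (\<integral>\<omega>. cond_prob {\<omega> \<in> space M. X i \<omega> = x ! i} \<omega>
          * cond_prob {\<omega> \<in> space M. Xrest i \<omega> = remove_coord i x} \<omega>
          * log b (cond_prob {\<omega> \<in> space M. X i \<omega> = x ! i} \<omega>) \<partial>M)"
proof -
  let ?r = "cond_prob {\<omega> \<in> space M. X i \<omega> = x ! i}"
  let ?s = "cond_prob {\<omega> \<in> space M. Xrest i \<omega> = remove_coord i x}"
  have event: "{\<omega> \<in> space M. Xrest i \<omega> = remove_coord i x} \<in> sets M"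
    by measurable
  have int_s: "(\<integral>\<omega>. ?s \<omega> \<partial>M) = pmass M (Xrest i) (remove_coord i x)"
  proof -
    have "(\<integral>\<omega>. ?s \<omega> \<partial>M) = (\<integral>\<omega>. indicator {\<omega> \<in> space M. Xrest i \<omega> = remove_coord i x} \<omega> \<partial>M)"
      using event
      by (intro W.real_cond_exp_int(2) integrable_real_indicator) (simp_all add: emeasure_eq_measure)
    also have "\<dots> = pmass M (Xrest i) (remove_coord i x)"
      using event by (simp add: pmass_def)
    finally show ?thesis .
  qed
  have "AE \<omega> in M. cpmf x (W \<omega>) = ?r \<omega> * ?s \<omega>"
    using cpmf_factorization[OF assms(1,2) length_Xvals[OF assms(3)]] .
  then have rs: "AE \<omega> in M. ?r \<omega> * ?s \<omega> = cpmf x (W \<omega>)"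
    by eventually_elim (rule sym)
  have "(\<integral>\<omega>. ?r \<omega> * ?s \<omega> \<partial>M) = (\<integral>\<omega>. cpmf x (W \<omega>) \<partial>M)"
    by (rule integral_cong_AE[OF _ _ rs]; measurable)
  also have "\<dots> = pX x"
    by (rule integral_cpmf)
  finally have int_rs: "(\<integral>\<omega>. ?r \<omega> * ?s \<omega> \<partial>M) = pX x" .
  have "(\<integral>\<omega>. ?r \<omega> * ?s \<omega> \<partial>M) * log b ((\<integral>\<omega>. ?r \<omega> * ?s \<omega> \<partial>M) / (\<integral>\<omega>. ?s \<omega> \<partial>M))
      \<le> (\<integral>\<omega>. ?r \<omega> * ?s \<omega> * log b (?r \<omega>) \<partial>M)"
    by (rule log_sum_inequality[OF b _ _ cond_prob_bounds cond_prob_bounds]; (use \<open>i < d\<close> in measurable))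
  then show ?thesis by (simp only: int_rs int_s)
qed

lemma sum_neg_cond_entropy_le:
  assumes CI: "\<And>i. i < d \<Longrightarrow> cond_indep_given M N W (X i) (Xrest i)"
  shows "(\<Sum>i<d. \<Sum>x\<in>Xvals. pX x * log b (pX x / pmass M (Xrest i) (remove_coord i x)))
    \<le> (\<integral>\<omega>. (\<Sum>x\<in>Xvals. cpmf x (W \<omega>) * log b (cpmf x (W \<omega>))) \<partial>M)"
proof -
  let ?r = "\<lambda>i x. cond_prob {\<omega> \<in> space M. X i \<omega> = x ! i}"
  let ?s = "\<lambda>i x. cond_prob {\<omega> \<in> space M. Xrest i \<omega> = remove_coord i x}"
  have integrable: "integrable M (\<lambda>\<omega>. ?r i x \<omega> * ?s i x \<omega> * log b (?r i x \<omega>))" if "i < d" for i x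
    by (rule integrable_mult_mult_log[OF b _ _ cond_prob_bounds cond_prob_bounds]; (use that in measurable))
  have "(\<Sum>i<d. \<Sum>x\<in>Xvals. pX x * log b (pX x / pmass M (Xrest i) (remove_coord i x)))
      \<le> (\<Sum>i<d. \<Sum>x\<in>Xvals. \<integral>\<omega>. ?r i x \<omega> * ?s i x \<omega> * log b (?r i x \<omega>) \<partial>M)"
    using CI by (intro sum_mono cond_entropy_term_le_integral) auto
  also have "\<dots> = (\<integral>\<omega>. (\<Sum>i<d. \<Sum>x\<in>Xvals. ?r i x \<omega> * ?s i x \<omega> * log b (?r i x \<omega>)) \<partial>M)"
    using integrable by (simp add: integrable_sum)
  also have "\<dots> \<le> (\<integral>\<omega>. (\<Sum>x\<in>Xvals. cpmf x (W \<omega>) * log b (cpmf x (W \<omega>))) \<partial>M)"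
  proof (rule integral_mono_AE)
    show "integrable M (\<lambda>\<omega>. \<Sum>i<d. \<Sum>x\<in>Xvals. ?r i x \<omega> * ?s i x \<omega> * log b (?r i x \<omega>))"
      using integrable by (intro Bochner_Integration.integrable_sum) auto
    show "integrable M (\<lambda>\<omega>. \<Sum>x\<in>Xvals. cpmf x (W \<omega>) * log b (cpmf x (W \<omega>)))"
      by (intro Bochner_Integration.integrable_sum integrable_cpmf_log)
    have "AE \<omega> in M. \<forall>i\<in>{..<d}. \<forall>x\<in>Xvals. cpmf x (W \<omega>) = ?r i x \<omega> * ?s i x \<omega>
        \<and> ?r i x \<omega> = (\<Sum>y\<in>{y \<in> Xvals. y ! i = x ! i}. cpmf y (W \<omega>))"
      using CI finite_Xvals
      by (intro AE_finite_allI AE_conjI cpmf_factorization cond_prob_X_eq) (simp_all add: length_Xvals)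
    then show "AE \<omega> in M. (\<Sum>i<d. \<Sum>x\<in>Xvals. ?r i x \<omega> * ?s i x \<omega> * log b (?r i x \<omega>))
        \<le> (\<Sum>x\<in>Xvals. cpmf x (W \<omega>) * log b (cpmf x (W \<omega>)))"
      using sum_cpmf
    proof eventually_elim
      case (elim \<omega>)
      then have "(\<Sum>i<d. \<Sum>x\<in>Xvals. ?r i x \<omega> * ?s i x \<omega> * log b (?r i x \<omega>))
          = (\<Sum>i<d. \<Sum>x\<in>Xvals. cpmf x (W \<omega>) * log b (\<Sum>y\<in>{y \<in> Xvals. y ! i = x ! i}. cpmf y (W \<omega>)))"
        by (intro sum.cong refl) simp
      also have "\<dots> \<le> (\<Sum>x\<in>Xvals. cpmf x (W \<omega>) * log b (cpmf x (W \<omega>)))"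
        using elim(2) by (intro entropy_subadditivity_lists[OF b finite_Xvals length_Xvals cpmf_nonneg])
      finally show ?case .
    qed
  qed
  finally show ?thesis .
qed

lemma integrable_cpmf_log_div: "integrable M (\<lambda>\<omega>. cpmf x (W \<omega>) * log b (cpmf x (W \<omega>) / pX x))"
proof (rule integrable_const_bound[where B="pX x * ((1 + 1 / pX x * (1 / pX x)) / ln b)"])
  show "AE \<omega> in M. norm (cpmf x (W \<omega>) * log b (cpmf x (W \<omega>) / pX x))
      \<le> pX x * ((1 + 1 / pX x * (1 / pX x)) / ln b)"
  proof (rule AE_I2, cases "pX x = 0")
    fix \<omega>
    assume "pX x \<noteq> 0"
    then have "0 < pX x" by (simp add: less_le)
    then have "\<bar>cpmf x (W \<omega>) * log b (cpmf x (W \<omega>) / pX x)\<bar>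
        = pX x * \<bar>cpmf x (W \<omega>) / pX x * log b (cpmf x (W \<omega>) / pX x)\<bar>"
      by (simp add: abs_mult)
    also have "\<dots> \<le> pX x * ((1 + 1 / pX x * (1 / pX x)) / ln b)"
      using \<open>0 < pX x\<close> cpmf_nonneg cpmf_le_1
      by (intro mult_left_mono abs_mult_log_le_of_le[OF b]) (simp_all add: divide_right_mono)
    finally show "norm (cpmf x (W \<omega>) * log b (cpmf x (W \<omega>) / pX x))
        \<le> pX x * ((1 + 1 / pX x * (1 / pX x)) / ln b)" by simp
  qed (simp add: log_def)
qed simp

lemma integral_cpmf_log_div:
  "(\<integral>\<omega>. cpmf x (W \<omega>) * log b (cpmf x (W \<omega>) / pX x) \<partial>M)
    = (\<integral>\<omega>. cpmf x (W \<omega>) * log b (cpmf x (W \<omega>)) \<partial>M) - pX x * log b (pX x)"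
proof (cases "pX x = 0")
  case True
  then have "AE \<omega> in M. cpmf x (W \<omega>) = 0"
    using integral_nonneg_eq_0_iff_AE[OF integrable_cpmf] integral_cpmf cpmf_nonneg by simp
  then have "(\<integral>\<omega>. cpmf x (W \<omega>) * log b (cpmf x (W \<omega>) / pX x) \<partial>M) = 0"
    and "(\<integral>\<omega>. cpmf x (W \<omega>) * log b (cpmf x (W \<omega>)) \<partial>M) = 0"
    by (auto intro!: integral_eq_zero_AE elim!: eventually_mono)
  then show ?thesis using True by simp
next
  case False
  then have "0 < pX x" by (simp add: less_le)
  have "cpmf x w * log b (cpmf x w / pX x) = cpmf x w * log b (cpmf x w) - cpmf x w * log b (pX x)" for w
    using \<open>0 < pX x\<close> b cpmf_nonneg[of x w]
    by (cases "cpmf x w = 0") (simp_all add: log_divide right_diff_distrib)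
  then have "(\<integral>\<omega>. cpmf x (W \<omega>) * log b (cpmf x (W \<omega>) / pX x) \<partial>M)
      = (\<integral>\<omega>. cpmf x (W \<omega>) * log b (cpmf x (W \<omega>)) \<partial>M) - (\<integral>\<omega>. cpmf x (W \<omega>) \<partial>M) * log b (pX x)"
    by (simp add: integrable_cpmf_log)
  then show ?thesis by (simp add: integral_cpmf)
qed

lemma dual_total_correlation_le_integral:
  assumes "\<And>i. i < d \<Longrightarrow> cond_indep_given M N W (X i) (Xrest i)"
  shows "dual_total_correlation b M d X
    \<le> (\<Sum>x\<in>Xvals. \<integral>\<omega>. cpmf x (W \<omega>) * log b (cpmf x (W \<omega>) / pX x) \<partial>M)"
proof -
  have "dual_total_correlation b M d X
      = - (\<Sum>x\<in>Xvals. pX x * log b (pX x))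
        + (\<Sum>i<d. \<Sum>x\<in>Xvals. pX x * log b (pX x / pmass M (Xrest i) (remove_coord i x)))"
    unfolding dual_total_correlation_def shannon_entropy_Xvec
    by (simp add: cond_shannon_entropy_coord sum_negf)
  also have "\<dots> \<le> - (\<Sum>x\<in>Xvals. pX x * log b (pX x))
        + (\<integral>\<omega>. (\<Sum>x\<in>Xvals. cpmf x (W \<omega>) * log b (cpmf x (W \<omega>))) \<partial>M)"
    using sum_neg_cond_entropy_le[OF assms] by simp
  also have "\<dots> = (\<Sum>x\<in>Xvals. \<integral>\<omega>. cpmf x (W \<omega>) * log b (cpmf x (W \<omega>) / pX x) \<partial>M)"
    by (simp add: integral_cpmf_log_div integrable_cpmf_log sum_subtractf)
  finally show ?thesis .
qed

end

lemma integral_mult_fst_snd: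
  fixes \<phi> :: "'x \<Rightarrow> real" and \<psi> :: "'y \<Rightarrow> real"
  assumes "prob_space M1" and "prob_space M2"
    and [measurable]: "\<phi> \<in> borel_measurable M1" "\<psi> \<in> borel_measurable M2"
    and \<phi>: "\<And>x. \<bar>\<phi> x\<bar> \<le> c1" and \<psi>: "\<And>y. \<bar>\<psi> y\<bar> \<le> c2"
  shows "integrable (M1 \<Otimes>\<^sub>M M2) (\<lambda>z. \<phi> (fst z) * \<psi> (snd z))"
    and "(\<integral>z. \<phi> (fst z) * \<psi> (snd z) \<partial>(M1 \<Otimes>\<^sub>M M2)) = (\<integral>x. \<phi> x \<partial>M1) * (\<integral>y. \<psi> y \<partial>M2)"
proof -
  interpret M1: prob_space M1 by fact
  interpret M2: prob_space M2 by fact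
  interpret P: pair_prob_space M1 M2 ..
  show int: "integrable (M1 \<Otimes>\<^sub>M M2) (\<lambda>z. \<phi> (fst z) * \<psi> (snd z))"
    by (rule P.P.integrable_const_bound[where B="c1 * c2"])
       (auto simp: abs_mult intro!: mult_mono' \<phi> \<psi>)
  have "(\<integral>z. \<phi> (fst z) * \<psi> (snd z) \<partial>(M1 \<Otimes>\<^sub>M M2)) = (\<integral>x. (\<integral>y. \<phi> x * \<psi> y \<partial>M2) \<partial>M1)"
    using P.integral_fst'[OF int] by simp
  then show "(\<integral>z. \<phi> (fst z) * \<psi> (snd z) \<partial>(M1 \<Otimes>\<^sub>M M2)) = (\<integral>x. \<phi> x \<partial>M1) * (\<integral>y. \<psi> y \<partial>M2)"
    by simp
qed

context finite_vector_observation
begin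

definition law_X :: "'v list measure" where
  "law_X = distr M (count_space UNIV) Xvec"

definition law_W :: "'w measure" where
  "law_W = distr M N W"

definition joint_density :: "'v list \<times> 'w \<Rightarrow> real" where
  "joint_density z = (\<Sum>x\<in>Xvals. indicator {x} (fst z) * (cpmf x (snd z) / pX x))"

lemma prob_space_law_X: "prob_space law_X"
  unfolding law_X_def by (rule prob_space_distr) simp

lemma prob_space_law_W: "prob_space law_W"
  unfolding law_W_def by (rule prob_space_distr) simp

lemma sets_law_X[simp]: "sets law_X = UNIV" and space_law_X[simp]: "space law_X = UNIV"
  by (simp_all add: law_X_def)

lemma sets_law_W[simp]: "sets law_W = sets N" and space_law_W[simp]: "space law_W = space N"
  by (simp_all add: law_W_def)

lemma borel_measurable_law_X: "f \<in> borel_measurable law_X"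
  by (subst measurable_cong_sets[of law_X "count_space UNIV" borel borel]) auto

lemma measurable_law_W[simp]: "measurable law_W K = measurable N K"
  by (rule measurable_cong_sets) simp_all

lemma sets_law_X_law_W: "sets (law_X \<Otimes>\<^sub>M law_W) = sets (count_space UNIV \<Otimes>\<^sub>M N)"
  by (rule sets_pair_measure_cong) simp_all

lemma measurable_joint_density[measurable]: "joint_density \<in> borel_measurable (law_X \<Otimes>\<^sub>M law_W)"
proof -
  have "(\<lambda>z. indicator {x} (fst z) :: real) \<in> borel_measurable (law_X \<Otimes>\<^sub>M law_W)" for x
    by (rule measurable_compose[OF measurable_fst borel_measurable_law_X])
  moreover have "(\<lambda>z. cpmf x (snd z) / pX x) \<in> borel_measurable (law_X \<Otimes>\<^sub>M law_W)" for x
    by (rule measurable_compose[OF measurable_snd, where g="\<lambda>w. cpmf x w / pX x"]) simp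
  ultimately show ?thesis
    unfolding joint_density_def[abs_def] by (intro borel_measurable_sum borel_measurable_times)
qed

lemma joint_density_eq: "joint_density (x, w) = (if x \<in> Xvals then cpmf x w / pX x else 0)"
proof -
  have "joint_density (x, w) = (\<Sum>y\<in>Xvals. if y = x then cpmf y w / pX y else 0)"
    unfolding joint_density_def by (intro sum.cong) (auto simp: indicator_def)
  then show ?thesis using finite_Xvals by simp
qed

lemma joint_density_nonneg: "0 \<le> joint_density z"
  using joint_density_eq[of "fst z" "snd z"] by (simp add: cpmf_nonneg)

lemma joint_density_le: "joint_density z \<le> (\<Sum>x\<in>Xvals. 1 / pX x)"
proof -
  have "joint_density z \<le> (if fst z \<in> Xvals then 1 / pX (fst z) else 0)"
    using joint_density_eq[of "fst z" "snd z"] by (simp add: cpmf_le_1 divide_right_mono)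
  also have "\<dots> \<le> (\<Sum>x\<in>Xvals. 1 / pX x)"
    using finite_Xvals by (auto intro: member_le_sum sum_nonneg)
  finally show ?thesis .
qed

lemma measure_law_X_singleton: "measure law_X {x} = pX x"
  unfolding law_X_def pmass_def by (subst measure_distr) (auto intro!: arg_cong[where f="measure M"])

lemma integral_law_X_indicator:
  "(\<integral>y. indicator {x} y * indicator A y \<partial>law_X) = (if x \<in> A then pX x else 0)"
proof -
  have "(\<integral>y. indicator {x} y * indicator A y \<partial>law_X) = measure law_X ({x} \<inter> A)"
    by (simp add: indicator_inter_arith[symmetric])
  then show ?thesis
    by (cases "x \<in> A") (simp_all add: measure_law_X_singleton)
qed

lemma integral_law_W:
  fixes f :: "'w \<Rightarrow> real"
  assumes "f \<in> borel_measurable N"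
  shows "(\<integral>w. f w \<partial>law_W) = (\<integral>\<omega>. f (W \<omega>) \<partial>M)"
  unfolding law_W_def using measurable_W assms by (rule integral_distr)

lemma measure_Xvec_in_eq_sum:
  assumes B[measurable]: "B \<in> sets N"
  shows "measure M {\<omega> \<in> space M. Xvec \<omega> \<in> A \<and> W \<omega> \<in> B}
    = (\<Sum>x\<in>Xvals \<inter> A. measure M {\<omega> \<in> space M. Xvec \<omega> = x \<and> W \<omega> \<in> B})"
proof -
  have "{\<omega> \<in> space M. Xvec \<omega> \<in> A \<and> W \<omega> \<in> B} = (\<Union>x\<in>Xvals \<inter> A. {\<omega> \<in> space M. Xvec \<omega> = x \<and> W \<omega> \<in> B})"
    by (auto simp: Xvals_def)
  moreover have "(\<lambda>x. {\<omega> \<in> space M. Xvec \<omega> = x \<and> W \<omega> \<in> B}) ` (Xvals \<inter> A) \<subseteq> sets M"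
    by (intro image_subsetI) measurable
  moreover have "disjoint_family_on (\<lambda>x. {\<omega> \<in> space M. Xvec \<omega> = x \<and> W \<omega> \<in> B}) (Xvals \<inter> A)"
    by (auto simp: disjoint_family_on_def)
  ultimately show ?thesis
    using finite_Xvals by (simp add: finite_measure_finite_Union)
qed

lemma integral_cpmf_div_indicator:
  assumes "B \<in> sets N"
  shows "pX x * (\<integral>w. cpmf x w / pX x * indicator B w \<partial>law_W)
    = measure M {\<omega> \<in> space M. Xvec \<omega> = x \<and> W \<omega> \<in> B}"
proof (cases "pX x = 0")
  case True
  then show ?thesis
    using measure_Xvec_eq_W_in_le[of x B] measure_nonneg[of M] by (simp add: antisym)
next
  case False
  have "(\<integral>w. cpmf x w / pX x * indicator B w \<partial>law_W) = (\<integral>\<omega>. indicator B (W \<omega>) * cpmf x (W \<omega>) \<partial>M) / pX x"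
    using assms by (simp add: integral_law_W mult.commute)
  then show ?thesis
    using False assms by (simp add: integral_indicator_mult_cpmf)
qed

lemma integral_joint_density_rectangle:
  assumes B: "B \<in> sets N"
  shows "(\<integral>z. joint_density z * indicator (A \<times> B) z \<partial>(law_X \<Otimes>\<^sub>M law_W))
    = measure M {\<omega> \<in> space M. Xvec \<omega> \<in> A \<and> W \<omega> \<in> B}"
proof -
  define m where "m x = measure M {\<omega> \<in> space M. Xvec \<omega> = x \<and> W \<omega> \<in> B}" for x
  define \<phi> :: "'v list \<Rightarrow> 'v list \<Rightarrow> real" where "\<phi> x y = indicator {x} y * indicator A y" for x y
  define \<psi> where "\<psi> x w = cpmf x w / pX x * indicator B w" for x w
  have \<psi>_bound: "\<bar>\<psi> x w\<bar> \<le> 1 / pX x" for x w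
    using cpmf_nonneg[of x w] cpmf_le_1[of x w]
    by (auto simp: \<psi>_def indicator_def abs_mult divide_right_mono)
  have \<phi>_bound: "\<bar>\<phi> x y\<bar> \<le> 1" for x y
    by (auto simp: \<phi>_def indicator_def)
  have \<psi>_measurable: "\<psi> x \<in> borel_measurable law_W" for x
    using B unfolding \<psi>_def[abs_def] by simp
  have product: "integrable (law_X \<Otimes>\<^sub>M law_W) (\<lambda>z. \<phi> x (fst z) * \<psi> x (snd z))"
    "(\<integral>z. \<phi> x (fst z) * \<psi> x (snd z) \<partial>(law_X \<Otimes>\<^sub>M law_W)) = (\<integral>y. \<phi> x y \<partial>law_X) * (\<integral>w. \<psi> x w \<partial>law_W)"
    for x
    by (rule integral_mult_fst_snd[OF prob_space_law_X prob_space_law_W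
        borel_measurable_law_X \<psi>_measurable \<phi>_bound \<psi>_bound])+
  have "(\<integral>z. joint_density z * indicator (A \<times> B) z \<partial>(law_X \<Otimes>\<^sub>M law_W))
      = (\<integral>z. (\<Sum>x\<in>Xvals. \<phi> x (fst z) * \<psi> x (snd z)) \<partial>(law_X \<Otimes>\<^sub>M law_W))"
    unfolding joint_density_def \<phi>_def \<psi>_def
    by (intro Bochner_Integration.integral_cong refl)
       (auto simp: sum_distrib_right indicator_times intro!: sum.cong)
  also have "\<dots> = (\<Sum>x\<in>Xvals. \<integral>z. \<phi> x (fst z) * \<psi> x (snd z) \<partial>(law_X \<Otimes>\<^sub>M law_W))"
    by (rule Bochner_Integration.integral_sum) (rule product(1))
  also have "\<dots> = (\<Sum>x\<in>Xvals. (\<integral>y. \<phi> x y \<partial>law_X) * (\<integral>w. \<psi> x w \<partial>law_W))"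
    by (simp only: product(2))
  also have "\<dots> = (\<Sum>x\<in>Xvals \<inter> A. m x)"
  proof -
    have "(\<integral>y. \<phi> x y \<partial>law_X) * (\<integral>w. \<psi> x w \<partial>law_W) = (if x \<in> A then m x else 0)" for x
      using integral_cpmf_div_indicator[OF B, of x]
      by (simp add: \<phi>_def \<psi>_def m_def integral_law_X_indicator)
    then show ?thesis
      using finite_Xvals by (simp add: sum.inter_restrict)
  qed
  also have "\<dots> = measure M {\<omega> \<in> space M. Xvec \<omega> \<in> A \<and> W \<omega> \<in> B}"
    unfolding m_def using B by (rule measure_Xvec_in_eq_sum[symmetric])
  finally show ?thesis .
qed

lemma prob_space_law_X_law_W: "prob_space (law_X \<Otimes>\<^sub>M law_W)"
  by (rule prob_space_pair[OF prob_space_law_X prob_space_law_W])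

lemma integrable_joint_density_indicator:
  assumes "C \<in> sets (law_X \<Otimes>\<^sub>M law_W)"
  shows "integrable (law_X \<Otimes>\<^sub>M law_W) (\<lambda>z. joint_density z * indicator C z)"
proof -
  interpret XW: prob_space "law_X \<Otimes>\<^sub>M law_W"
    by (rule prob_space_law_X_law_W)
  show ?thesis
    using assms joint_density_nonneg joint_density_le
    by (intro XW.integrable_const_bound[where B="\<Sum>x\<in>Xvals. 1 / pX x"] AE_I2)
       (auto simp: indicator_def abs_of_nonneg intro!: sum_nonneg)
qed

lemma distr_Xvec_W_eq_density:
  "distr M (count_space UNIV \<Otimes>\<^sub>M N) (\<lambda>\<omega>. (Xvec \<omega>, W \<omega>)) = density (law_X \<Otimes>\<^sub>M law_W) joint_density"
proof (rule measure_eqI_generator_eq[OF Int_stable_pair_measure_generator])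
  let ?E = "{a \<times> b |a b. a \<in> sets (count_space UNIV) \<and> b \<in> sets N}"
  let ?\<Omega> = "space (count_space UNIV) \<times> space N"
  show "?E \<subseteq> Pow ?\<Omega>" using sets.space_closed[of N] by auto
  show "sets (distr M (count_space UNIV \<Otimes>\<^sub>M N) (\<lambda>\<omega>. (Xvec \<omega>, W \<omega>))) = sigma_sets ?\<Omega> ?E"
    by (simp add: sets_pair_measure)
  show "sets (density (law_X \<Otimes>\<^sub>M law_W) joint_density) = sigma_sets ?\<Omega> ?E"
    by (simp add: sets_law_X_law_W sets_pair_measure)
  show "range (\<lambda>i. ?\<Omega>) \<subseteq> ?E" by auto
  show "(\<Union>i. ?\<Omega>) = ?\<Omega>" by simp
  show "emeasure (distr M (count_space UNIV \<Otimes>\<^sub>M N) (\<lambda>\<omega>. (Xvec \<omega>, W \<omega>))) ?\<Omega> \<noteq> \<infinity>" for i :: nat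
    by (simp add: emeasure_distr)
next
  fix C :: "('v list \<times> 'w) set"
  assume "C \<in> {a \<times> b |a b. a \<in> sets (count_space UNIV) \<and> b \<in> sets N}"
  then obtain A B where C: "C = A \<times> B" and B: "B \<in> sets N" by auto
  then have C_sets: "C \<in> sets (law_X \<Otimes>\<^sub>M law_W)" by (auto intro!: pair_measureI)
  have "emeasure (distr M (count_space UNIV \<Otimes>\<^sub>M N) (\<lambda>\<omega>. (Xvec \<omega>, W \<omega>))) C
      = emeasure M {\<omega> \<in> space M. Xvec \<omega> \<in> A \<and> W \<omega> \<in> B}"
    using C_sets C
    by (subst emeasure_distr) (auto simp: sets_law_X_law_W intro!: arg_cong[where f="emeasure M"])
  also have "\<dots> = ennreal (\<integral>z. joint_density z * indicator C z \<partial>(law_X \<Otimes>\<^sub>M law_W))"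
    using B by (simp add: C integral_joint_density_rectangle emeasure_eq_measure)
  also have "\<dots> = (\<integral>\<^sup>+z. ennreal (joint_density z) * indicator C z \<partial>(law_X \<Otimes>\<^sub>M law_W))"
    using integrable_joint_density_indicator[OF C_sets] joint_density_nonneg
    by (subst nn_integral_eq_integral[symmetric]) (auto intro!: nn_integral_cong simp: indicator_def)
  also have "\<dots> = emeasure (density (law_X \<Otimes>\<^sub>M law_W) joint_density) C"
    using C_sets by (subst emeasure_density) auto
  finally show "emeasure (distr M (count_space UNIV \<Otimes>\<^sub>M N) (\<lambda>\<omega>. (Xvec \<omega>, W \<omega>))) C
      = emeasure (density (law_X \<Otimes>\<^sub>M law_W) joint_density) C" .
qed

lemma mutual_information_eq:
  "mutual_information b (count_space UNIV) N Xvec W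
    = (\<Sum>x\<in>Xvals. \<integral>\<omega>. cpmf x (W \<omega>) * log b (cpmf x (W \<omega>) / pX x) \<partial>M)"
proof -
  define h where "h x w = cpmf x w / pX x * log b (cpmf x w / pX x)" for x w
  have h_bound: "\<bar>h x w\<bar> \<le> (1 + 1 / pX x * (1 / pX x)) / ln b" for x w
    unfolding h_def using cpmf_nonneg cpmf_le_1
    by (intro abs_mult_log_le_of_le[OF b]) (simp_all add: divide_right_mono)
  have h_measurable: "h x \<in> borel_measurable law_W" for x
    unfolding h_def[abs_def] by simp
  define \<phi> :: "'v list \<Rightarrow> 'v list \<Rightarrow> real" where "\<phi> x y = indicator {x} y" for x y
  have \<phi>_bound: "\<bar>\<phi> x y\<bar> \<le> 1" for x y
    by (simp add: \<phi>_def indicator_def)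
  have product: "integrable (law_X \<Otimes>\<^sub>M law_W) (\<lambda>z. \<phi> x (fst z) * h x (snd z))"
    "(\<integral>z. \<phi> x (fst z) * h x (snd z) \<partial>(law_X \<Otimes>\<^sub>M law_W)) = (\<integral>y. \<phi> x y \<partial>law_X) * (\<integral>w. h x w \<partial>law_W)"
    for x
    by (rule integral_mult_fst_snd[OF prob_space_law_X prob_space_law_W
        borel_measurable_law_X h_measurable \<phi>_bound h_bound])+
  have "joint_density z * log b (joint_density z) = (\<Sum>x\<in>Xvals. \<phi> x (fst z) * h x (snd z))" for z
  proof -
    obtain y w where z: "z = (y, w)" by fastforce
    have "(\<Sum>x\<in>Xvals. \<phi> x y * h x w) = (\<Sum>x\<in>Xvals. if x = y then h x w else 0)"
      by (intro sum.cong) (auto simp: \<phi>_def indicator_def)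
    then show ?thesis
      using finite_Xvals by (simp add: z joint_density_eq h_def)
  qed
  then have "mutual_information b (count_space UNIV) N Xvec W
      = (\<integral>z. (\<Sum>x\<in>Xvals. \<phi> x (fst z) * h x (snd z)) \<partial>(law_X \<Otimes>\<^sub>M law_W))"
    unfolding mutual_information_def law_X_def[symmetric] law_W_def[symmetric] distr_Xvec_W_eq_density
    using prob_space_imp_sigma_finite[OF prob_space_law_X_law_W]
    by (subst sigma_finite_measure.KL_density[OF _ b]) (simp_all add: joint_density_nonneg)
  also have "\<dots> = (\<Sum>x\<in>Xvals. \<integral>z. \<phi> x (fst z) * h x (snd z) \<partial>(law_X \<Otimes>\<^sub>M law_W))"
    by (rule Bochner_Integration.integral_sum) (rule product(1))
  also have "\<dots> = (\<Sum>x\<in>Xvals. pX x * (\<integral>w. h x w \<partial>law_W))"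
    by (intro sum.cong refl) (simp only: product(2), simp add: \<phi>_def measure_law_X_singleton)
  also have "\<dots> = (\<Sum>x\<in>Xvals. \<integral>\<omega>. cpmf x (W \<omega>) * log b (cpmf x (W \<omega>) / pX x) \<partial>M)"
    by (intro sum.cong refl) (simp add: integral_law_W h_def log_def)
  finally show ?thesis .
qed

theorem dual_total_correlation_le_mutual_information:
  assumes "\<And>i. i < d \<Longrightarrow> cond_indep_given M N W (X i) (Xrest i)"
  shows "dual_total_correlation b M d X \<le> mutual_information b (count_space UNIV) N Xvec W"
  using dual_total_correlation_le_integral[OF assms] by (simp add: mutual_information_eq)

end

section \<open>Discrete observations\<close>

lemma (in finite_measure) AE_measure_fibre_pos:
  assumes countable: "countable (W ` space M)" and fibre: "\<And>w. {\<omega> \<in> space M. W \<omega> = w} \<in> sets M"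
  shows "AE \<omega> in M. 0 < measure M {\<omega>' \<in> space M. W \<omega>' = W \<omega>}"
proof -
  have "AE \<omega> in M. W \<omega> = w \<longrightarrow> 0 < measure M {\<omega>' \<in> space M. W \<omega>' = w}" for w
  proof (cases "measure M {\<omega>' \<in> space M. W \<omega>' = w} = 0")
    case True
    with fibre have "{\<omega>' \<in> space M. W \<omega>' = w} \<in> null_sets M"
      by (simp add: emeasure_eq_measure null_sets_def)
    then show ?thesis by (rule AE_mp[OF AE_not_in]) (auto intro: AE_I2)
  qed (simp add: zero_less_measure_iff)
  then have "AE \<omega> in M. \<forall>w\<in>W ` space M. W \<omega> = w \<longrightarrow> 0 < measure M {\<omega>' \<in> space M. W \<omega>' = w}"
    by (subst AE_ball_countable[OF countable]) simp
  then show ?thesis by (rule AE_mp) (auto intro: AE_I2)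
qed

lemma nn_integral_comp_countable_range:
  assumes countable: "countable (W ` space M)" and fibre: "\<And>w. {\<omega> \<in> space M. W \<omega> = w} \<in> sets M"
  shows "(\<integral>\<^sup>+\<omega>. f (W \<omega>) \<partial>M)
    = (\<integral>\<^sup>+w. f w * emeasure M {\<omega> \<in> space M. W \<omega> = w} \<partial>count_space (W ` space M))"
proof -
  have "(\<integral>\<^sup>+\<omega>. f (W \<omega>) \<partial>M)
      = (\<integral>\<^sup>+\<omega>. (\<integral>\<^sup>+w. f w * indicator {\<omega>' \<in> space M. W \<omega>' = w} \<omega> \<partial>count_space (W ` space M)) \<partial>M)"
  proof (rule nn_integral_cong)
    fix \<omega> assume "\<omega> \<in> space M"
    then have "(\<integral>\<^sup>+w. f w * indicator {\<omega>' \<in> space M. W \<omega>' = w} \<omega> \<partial>count_space (W ` space M))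
        = (\<integral>\<^sup>+w. f w * indicator {W \<omega>} w \<partial>count_space (W ` space M))"
      by (intro nn_integral_cong) (auto simp: indicator_def)
    also have "\<dots> = f (W \<omega>)"
      using \<open>\<omega> \<in> space M\<close> by (simp add: nn_integral_indicator_singleton)
    finally show "f (W \<omega>) = (\<integral>\<^sup>+w. f w * indicator {\<omega>' \<in> space M. W \<omega>' = w} \<omega> \<partial>count_space (W ` space M))"
      by simp
  qed
  also have "\<dots> = (\<integral>\<^sup>+w. (\<integral>\<^sup>+\<omega>. f w * indicator {\<omega>' \<in> space M. W \<omega>' = w} \<omega> \<partial>M) \<partial>count_space (W ` space M))"
    by (rule nn_integral_count_space_nn_integral[OF countable]) (use fibre in measurable)
  also have "\<dots> = (\<integral>\<^sup>+w. f w * emeasure M {\<omega> \<in> space M. W \<omega> = w} \<partial>count_space (W ` space M))"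
    using fibre by (intro nn_integral_cong nn_integral_cmult_indicator)
  finally show ?thesis .
qed

lemma ereal_le_enn2ereal_ennreal: "ereal x \<le> enn2ereal (ennreal x)"
  by (cases "0 \<le> x") (simp_all add: ennreal_neg zero_ennreal.rep_eq)

context finite_vector_observation
begin

lemma cpmf_mult_measure_fibre_le:
  assumes "w \<in> space N" and fibre: "{\<omega> \<in> space M. W \<omega> = w} \<in> sets M"
  shows "cpmf x w * measure M {\<omega> \<in> space M. W \<omega> = w} \<le> pX x"
proof -
  \<comment> \<open>\<open>{w}\<close> need not be in \<open>sets N\<close>, so integrate over a superlevel set of \<open>cpmf x\<close> instead\<close>
  define B where "B = {v \<in> space N. cpmf x w \<le> cpmf x v}"
  have B[measurable]: "B \<in> sets N" unfolding B_def by measurable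
  have integrable_fibre: "integrable M (indicator {\<omega> \<in> space M. W \<omega> = w} :: 'a \<Rightarrow> real)"
    using fibre by (rule integrable_real_indicator) (simp add: emeasure_eq_measure)
  have "cpmf x w * measure M {\<omega> \<in> space M. W \<omega> = w}
      = (\<integral>\<omega>. indicator {\<omega> \<in> space M. W \<omega> = w} \<omega> * cpmf x w \<partial>M)"
    using fibre by simp
  also have "\<dots> \<le> (\<integral>\<omega>. indicator B (W \<omega>) * cpmf x (W \<omega>) \<partial>M)"
  proof (rule integral_mono)
    show "integrable M (\<lambda>\<omega>. indicator {\<omega> \<in> space M. W \<omega> = w} \<omega> * cpmf x w)"
      using integrable_fibre by simp
    show "integrable M (\<lambda>\<omega>. indicator B (W \<omega>) * cpmf x (W \<omega>))"
      by (rule integrable_const_bound[where B=1]) (simp_all add: indicator_def cpmf_nonneg cpmf_le_1)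
    show "indicator {\<omega> \<in> space M. W \<omega> = w} \<omega> * cpmf x w \<le> indicator B (W \<omega>) * cpmf x (W \<omega>)"
      if "\<omega> \<in> space M" for \<omega>
      using that \<open>w \<in> space N\<close> cpmf_nonneg by (auto simp: B_def indicator_def)
  qed
  also have "\<dots> = measure M {\<omega> \<in> space M. Xvec \<omega> = x \<and> W \<omega> \<in> B}"
    using B by (rule integral_indicator_mult_cpmf)
  also have "\<dots> \<le> pX x"
    by (rule measure_Xvec_eq_W_in_le)
  finally show ?thesis .
qed

lemma sum_cpmf_log_div_le:
  assumes countable: "countable (W ` space M)"
    and fibre: "\<And>w. {\<omega> \<in> space M. W \<omega> = w} \<in> sets M"
  shows "AE \<omega> in M. (\<Sum>x\<in>Xvals. cpmf x (W \<omega>) * log b (cpmf x (W \<omega>) / pX x))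
    \<le> - log b (measure M {\<omega>' \<in> space M. W \<omega>' = W \<omega>})"
  using AE_measure_fibre_pos[OF countable fibre] sum_cpmf AE_space
proof eventually_elim
  case (elim \<omega>)
  define p where "p = measure M {\<omega>' \<in> space M. W \<omega>' = W \<omega>}"
  have "0 < p" using elim(1) by (simp add: p_def)
  have "cpmf x (W \<omega>) * log b (cpmf x (W \<omega>) / pX x) \<le> cpmf x (W \<omega>) * - log b p" for x
  proof (cases "cpmf x (W \<omega>) = 0 \<or> pX x = 0")
    case True
    have "p \<le> 1" by (simp add: p_def)
    with \<open>0 < p\<close> b have "0 \<le> - log b p" by simp
    then have "0 \<le> cpmf x (W \<omega>) * - log b p"
      by (intro mult_nonneg_nonneg cpmf_nonneg)
    moreover have "cpmf x (W \<omega>) * log b (cpmf x (W \<omega>) / pX x) = 0"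
      using True by (auto simp: log_def)
    ultimately show ?thesis by linarith
  next
    case False
    then have "0 < cpmf x (W \<omega>)" "0 < pX x"
      using cpmf_nonneg[of x "W \<omega>"] pX_nonneg[of x] by (simp_all add: less_le)
    have "cpmf x (W \<omega>) * p \<le> pX x"
      unfolding p_def using elim(3) measurable_space[OF measurable_W]
      by (intro cpmf_mult_measure_fibre_le fibre) auto
    then have "cpmf x (W \<omega>) / pX x \<le> 1 / p"
      using \<open>0 < p\<close> \<open>0 < pX x\<close> by (simp add: field_simps)
    then have "log b (cpmf x (W \<omega>) / pX x) \<le> log b (1 / p)"
      using \<open>0 < p\<close> \<open>0 < pX x\<close> \<open>0 < cpmf x (W \<omega>)\<close> b by simp
    also have "\<dots> = - log b p"
      using \<open>0 < p\<close> b by (simp add: log_divide)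
    finally have "log b (cpmf x (W \<omega>) / pX x) \<le> - log b p" .
    then show ?thesis
      using cpmf_nonneg by (rule mult_left_mono)
  qed
  then have "(\<Sum>x\<in>Xvals. cpmf x (W \<omega>) * log b (cpmf x (W \<omega>) / pX x)) \<le> (\<Sum>x\<in>Xvals. cpmf x (W \<omega>) * - log b p)"
    by (rule sum_mono)
  also have "\<dots> = - log b p"
    using elim(2) by (simp add: sum_negf sum_distrib_right[symmetric])
  finally show ?case by (simp add: p_def)
qed

theorem mutual_information_le_discrete_entropy:
  assumes countable: "countable (W ` space M)"
    and fibre: "\<And>w. {\<omega> \<in> space M. W \<omega> = w} \<in> sets M"
  shows "ennreal (mutual_information b (count_space UNIV) N Xvec W) \<le> discrete_entropy b M W"
proof -
  define h where "h \<omega> = (\<Sum>x\<in>Xvals. cpmf x (W \<omega>) * log b (cpmf x (W \<omega>) / pX x))" for \<omega>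
  define H where "H w = - log b (measure M {\<omega> \<in> space M. W \<omega> = w})" for w
  have H_nonneg: "0 \<le> H w" for w
  proof (cases "measure M {\<omega> \<in> space M. W \<omega> = w} = 0")
    case False
    then show ?thesis using b by (simp add: H_def measure_le_1 less_le)
  qed (simp add: H_def log_def)
  have "integrable M h"
    unfolding h_def by (intro Bochner_Integration.integrable_sum integrable_cpmf_log_div)
  have "ennreal (mutual_information b (count_space UNIV) N Xvec W) = ennreal (\<integral>\<omega>. h \<omega> \<partial>M)"
    unfolding mutual_information_eq h_def
    by (subst Bochner_Integration.integral_sum) (simp_all add: integrable_cpmf_log_div)
  also have "\<dots> \<le> ennreal (\<integral>\<omega>. max 0 (h \<omega>) \<partial>M)"
    using \<open>integrable M h\<close> by (intro ennreal_leI integral_mono integrable_max) auto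
  also have "\<dots> = (\<integral>\<^sup>+\<omega>. ennreal (max 0 (h \<omega>)) \<partial>M)"
    using \<open>integrable M h\<close> by (intro nn_integral_eq_integral[symmetric] integrable_max) auto
  also have "\<dots> \<le> (\<integral>\<^sup>+\<omega>. ennreal (H (W \<omega>)) \<partial>M)"
    using sum_cpmf_log_div_le[OF countable fibre]
    by (intro nn_integral_mono_AE) (auto simp: h_def H_def H_nonneg elim!: eventually_mono intro!: ennreal_leI)
  also have "\<dots> = (\<integral>\<^sup>+w. ennreal (H w) * emeasure M {\<omega> \<in> space M. W \<omega> = w} \<partial>count_space (W ` space M))"
    by (rule nn_integral_comp_countable_range[OF countable fibre])
  also have "\<dots> = discrete_entropy b M W"
    unfolding discrete_entropy_def
  proof (intro nn_integral_cong)
    fix w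
    have "ennreal (H w) * emeasure M {\<omega> \<in> space M. W \<omega> = w} = ennreal (H w * pmass M W w)"
      using fibre by (simp add: emeasure_eq_measure pmass_def ennreal_mult H_nonneg)
    then show "ennreal (H w) * emeasure M {\<omega> \<in> space M. W \<omega> = w}
        = ennreal (- (pmass M W w * log b (pmass M W w)))"
      by (simp add: H_def pmass_def mult.commute)
  qed
  finally show ?thesis .
qed

end

theorem mainTheorem14:
  fixes M :: "'a measure" and N :: "'w measure" and b :: real and d :: nat
    and X :: "nat \<Rightarrow> 'a \<Rightarrow> 'v" and S :: "nat \<Rightarrow> 'v set" and W :: "'a \<Rightarrow> 'w"
  assumes "prob_space M" and "1 < b"
    and "\<And>i. i < d \<Longrightarrow> finite (S i)"
    and "\<And>i. i < d \<Longrightarrow> X i \<in> measurable M (count_space UNIV)"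
    and "\<And>i \<omega>. i < d \<Longrightarrow> \<omega> \<in> space M \<Longrightarrow> X i \<omega> \<in> S i"
    and "W \<in> measurable M N"
    and "\<And>i. i < d \<Longrightarrow> cond_indep_given M N W (X i) (rvec_minus d X i)"
  shows "dual_total_correlation b M d X
           \<le> prob_space.mutual_information M b (count_space UNIV) N (rvec d X) W
         \<and> (countable (W ` space M) \<and> (\<forall>w. {\<omega> \<in> space M. W \<omega> = w} \<in> sets M) \<longrightarrow>
           ereal (dual_total_correlation b M d X) \<le> enn2ereal (discrete_entropy b M W))"
proof -
  interpret finite_vector_observation M N b d X S W
    using assms(1-6) by (intro finite_vector_observation.intro finite_vector_observation_axioms.intro)
  let ?I = "mutual_information b (count_space UNIV) N (rvec d X) W"
  have "dual_total_correlation b M d X \<le> ?I"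
    using assms(7) by (rule dual_total_correlation_le_mutual_information)
  moreover have "ereal (dual_total_correlation b M d X) \<le> enn2ereal (discrete_entropy b M W)"
    if "countable (W ` space M)" and "\<forall>w. {\<omega> \<in> space M. W \<omega> = w} \<in> sets M"
  proof -
    have "ereal (dual_total_correlation b M d X) \<le> ereal ?I"
      using \<open>dual_total_correlation b M d X \<le> ?I\<close> by simp
    also have "\<dots> \<le> enn2ereal (ennreal ?I)"
      by (rule ereal_le_enn2ereal_ennreal)
    also have "\<dots> \<le> enn2ereal (discrete_entropy b M W)"
      using mutual_information_le_discrete_entropy that by (simp add: less_eq_ennreal.rep_eq[symmetric])
    finally show ?thesis .
  qed
  ultimately show ?thesis by blast
qed

end
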